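(* Let $X$ be a real Banach space and let $A \subset X$ be a balanced, bounded, convex, closed subset with nonempty interior. If there is a compact subset $K \subset X$ such that $B_X \subset A + K$, then for every $\lambda$ with $0<\lambda < 1/2$, $A$ contains a finite-codimensional ball of radius $\lambda$, i.e. there exist $x \in A$ and a finite-codimensional linear subspace $Y \subset X$ with $x + \lambda B_Y \subset A$.
   Context: $B_X$ is the closed unit ball of $X$ and $B_Y = B_X \cap Y$. $A$ is balanced if $tA \subset A$ for all $|t| \le 1$. $A + K$ is the Minkowski sum $\{a+c: a\in A, c\in K\}$. *)

theory Defs
  imports "HOL-Analysis.Analysis"
begin

definition balanced :: "'a::real_vector set \<Rightarrow> bool" where
  "balanced A \<longleftrightarrow> (\<forall>t::real. \<bar>t\<bar> \<le> 1 \<longrightarrow> (\<lambda>x. t *\<^sub>R x) ` A \<subseteq> A)"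

text \<open>A linear subspace Y has finite codimension if Y together with finitely many
  vectors spans the whole space (equivalently, X/Y is finite-dimensional).\<close>
definition finite_codim :: "'a::real_vector set \<Rightarrow> bool" where
  "finite_codim Y \<longleftrightarrow> subspace Y \<and> (\<exists>F. finite F \<and> span (Y \<union> F) = UNIV)"

end

theory Submission
  imports Defs
begin

text \<open>Since A is balanced and convex with nonempty interior, its Minkowski functional p is a
  continuous sublinear functional. Put \<open>\<kappa> = 1/r - 1 > 1\<close>. The compact set of those c in K with
  \<open>p c \<ge> \<kappa>\<close> is covered by finitely many open sets \<open>{c. p (k - c) < \<kappa> - 1}\<close>; for each centre k
  Hahn-Banach gives a linear \<open>g\<^sub>k \<le> p\<close> with \<open>g\<^sub>k k = p k\<close>, and Y is the intersection of their
  kernels. If \<open>a + c \<in> Y\<close> with \<open>a \<in> A\<close>, \<open>c \<in> K\<close> and \<open>p c \<ge> \<kappa>\<close>, then for a nearby centre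
  \<open>g\<^sub>k c > \<kappa> - (\<kappa> - 1) = 1\<close>, whereas \<open>g\<^sub>k c = g\<^sub>k (-a) \<le> p (-a) \<le> 1\<close>. So c lies in \<open>\<kappa> A\<close>, and
  every \<open>y = a + c\<close> in the unit ball of Y satisfies \<open>r y = r a + (1 - r) (c / \<kappa>) \<in> A\<close>.\<close>

section \<open>Hahn-Banach theorem\<close>

definition sublinear :: "('a::real_vector \<Rightarrow> real) \<Rightarrow> bool" where
  "sublinear p \<longleftrightarrow> (\<forall>x y. p (x + y) \<le> p x + p y) \<and> (\<forall>t x. 0 < t \<longrightarrow> p (t *\<^sub>R x) = t * p x)"

lemma sublinear_add_le: "sublinear p \<Longrightarrow> p (x + y) \<le> p x + p y"
  by (simp add: sublinear_def)

lemma sublinear_scaleR_pos: "sublinear p \<Longrightarrow> 0 < t \<Longrightarrow> p (t *\<^sub>R x) = t * p x"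
  by (simp add: sublinear_def)

lemma sublinear_zero: "sublinear p \<Longrightarrow> p 0 = 0"
  using sublinear_scaleR_pos[of p 2 0] by simp

lemma sublinear_scaleR_ge:
  assumes "sublinear p"
  shows "t * p x \<le> p (t *\<^sub>R x)"
proof (cases "0 < t")
  case True
  then show ?thesis using sublinear_scaleR_pos[OF assms] by simp
next
  case False
  have "0 \<le> p x + p (- x)"
    using sublinear_add_le[OF assms, of x "- x"] sublinear_zero[OF assms] by simp
  then have "t * p x \<le> (- t) * p (- x)"
    using False mult_left_mono_neg[of "- p (- x)" "p x" t] by simp
  also have "\<dots> = p (t *\<^sub>R x)"
  proof (cases "t = 0")
    case True
    then show ?thesis using sublinear_zero[OF assms] by simp
  next
    case False
    then have "0 < - t" using \<open>\<not> 0 < t\<close> by simp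
    then show ?thesis using sublinear_scaleR_pos[OF assms, of "- t" "- x"] by simp
  qed
  finally show ?thesis .
qed

text \<open>A linear functional on a subspace that is dominated by \<open>p\<close> is represented by its graph,
  a subspace of \<open>'a \<times> real\<close>; domination alone already makes the graph single-valued.\<close>
definition dominated_graph :: "('a::real_vector \<Rightarrow> real) \<Rightarrow> ('a \<times> real) set \<Rightarrow> bool" where
  "dominated_graph p G \<longleftrightarrow> subspace G \<and> (\<forall>(x, a) \<in> G. a \<le> p x)"

lemma dominated_graph_unique:
  assumes "dominated_graph p G" "(x, a) \<in> G" "(x, b) \<in> G"
  shows "a = b"
proof (rule ccontr)
  assume "a \<noteq> b"
  have sub: "subspace G" and dom: "\<And>x a. (x, a) \<in> G \<Longrightarrow> a \<le> p x"
    using assms(1) by (auto simp: dominated_graph_def)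
  define t where "t = (\<bar>p 0\<bar> + 1) / (a - b)"
  have "t *\<^sub>R ((x, a) - (x, b)) \<in> G"
    using sub assms(2,3) by (intro subspace_scale subspace_diff)
  then have "t * (a - b) \<le> p 0" using dom by simp
  moreover have "t * (a - b) = \<bar>p 0\<bar> + 1" using \<open>a \<noteq> b\<close> by (simp add: t_def)
  ultimately show False by linarith
qed

lemma dominated_graph_extend:
  assumes p: "sublinear p" and G: "dominated_graph p G"
  obtains c where "dominated_graph p (span (insert (y, c) G))"
proof -
  have sub: "subspace G" and dom: "\<And>x a. (x, a) \<in> G \<Longrightarrow> a \<le> p x"
    using G by (auto simp: dominated_graph_def)
  have bound: "a - p (x - y) \<le> p (x' + y) - a'" if "(x, a) \<in> G" "(x', a') \<in> G" for x a x' a'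
  proof -
    have "a + a' \<le> p (x + x')" using dom subspace_add[OF sub that] by simp
    also have "\<dots> \<le> p (x - y) + p (x' + y)"
      using sublinear_add_le[OF p, of "x - y" "x' + y"] by simp
    finally show ?thesis by simp
  qed
  define L where "L = {a - p (x - y) | x a. (x, a) \<in> G}"
  define c where "c = Sup L"
  have "(0, 0) \<in> G" using subspace_0[OF sub] by (simp add: zero_prod_def)
  then have "L \<noteq> {}" and "bdd_above L"
    using bound unfolding L_def by (auto intro!: bdd_aboveI)
  then have c_lower: "a - p (x - y) \<le> c" and c_upper: "c \<le> p (x + y) - a"
    if "(x, a) \<in> G" for x a
    using that bound unfolding c_def by (auto simp: L_def intro!: cSup_upper cSup_least)
  have "a \<le> p x" if xa: "(x, a) \<in> span (insert (y, c) G)" for x a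
  proof -
    obtain t where t: "(x - t *\<^sub>R y, a - t * c) \<in> G"
      using xa span_eq_iff[THEN iffD2, OF sub] by (auto simp: span_insert simp del: span_eq_iff)
    consider "t = 0" | "0 < t" | "t < 0" by linarith
    then show ?thesis
    proof cases
      case 1
      then show ?thesis using dom t by simp
    next
      case 2
      have scaled: "((1 / t) *\<^sub>R x - y, a / t - c) \<in> G"
        using subspace_scale[OF sub t, of "1 / t"] 2 by (simp add: algebra_simps)
      have "a / t \<le> p ((1 / t) *\<^sub>R x)"
        using c_upper[OF scaled] by simp
      then show ?thesis using 2 sublinear_scaleR_pos[OF p, of "1 / t" x] by (simp add: field_simps)
    next
      case 3
      have scaled: "((- 1 / t) *\<^sub>R x + y, - a / t + c) \<in> G"
        using subspace_scale[OF sub t, of "- 1 / t"] 3 by (simp add: algebra_simps)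
      have "- a / t \<le> p ((- 1 / t) *\<^sub>R x)"
        using c_lower[OF scaled] by simp
      then show ?thesis using 3 sublinear_scaleR_pos[OF p, of "- 1 / t" x] by (simp add: field_simps)
    qed
  qed
  then have "dominated_graph p (span (insert (y, c) G))"
    by (auto simp: dominated_graph_def)
  then show ?thesis by (rule that)
qed

lemma dominated_graph_Union_chain:
  assumes "\<And>G. G \<in> \<C> \<Longrightarrow> dominated_graph p G"
    and "\<And>G H. G \<in> \<C> \<Longrightarrow> H \<in> \<C> \<Longrightarrow> G \<subseteq> H \<or> H \<subseteq> G"
    and "\<C> \<noteq> {}"
  shows "dominated_graph p (\<Union>\<C>)"
proof -
  have sub: "\<And>G. G \<in> \<C> \<Longrightarrow> subspace G" using assms(1) by (simp add: dominated_graph_def)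
  have "subspace (\<Union>\<C>)"
    unfolding subspace_def
  proof (intro conjI ballI allI)
    show "0 \<in> \<Union>\<C>" using assms(3) sub subspace_0 by blast
    fix u v assume "u \<in> \<Union>\<C>" "v \<in> \<Union>\<C>"
    then obtain G H where "G \<in> \<C>" "H \<in> \<C>" "u \<in> G" "v \<in> H" by blast
    then show "u + v \<in> \<Union>\<C>" using assms(2)[of G H] sub subspace_add by blast
  next
    fix t u assume "u \<in> \<Union>\<C>"
    then show "t *\<^sub>R u \<in> \<Union>\<C>" using sub subspace_scale by blast
  qed
  then show ?thesis using assms(1) by (fastforce simp: dominated_graph_def)
qed

lemma linear_subspace_graph:
  assumes "subspace G" and "\<And>x. \<exists>!a. (x, a) \<in> G"
  shows "linear (\<lambda>x. THE a. (x, a) \<in> G)"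
proof -
  define g where "g x = (THE a. (x, a) \<in> G)" for x
  have graph: "(x, a) \<in> G \<longleftrightarrow> a = g x" for x a
    unfolding g_def using theI'[OF assms(2)] the1_equality[OF assms(2)] by blast
  show ?thesis
    unfolding g_def[symmetric]
  proof (rule linearI)
    show "g (x + y) = g x + g y" for x y
      using subspace_add[OF assms(1), of "(x, g x)" "(y, g y)"] graph by simp
    show "g (t *\<^sub>R x) = t *\<^sub>R g x" for t x
      using subspace_scale[OF assms(1), of "(x, g x)" t] graph by simp
  qed
qed

theorem hahn_banach_supporting_functional:
  assumes p: "sublinear p"
  obtains g where "linear g" "\<And>x. g x \<le> p x" "g x0 = p x0"
proof -
  define \<A> where "\<A> = {G. dominated_graph p G \<and> (x0, p x0) \<in> G}"
  have "span {(x0, p x0)} \<in> \<A>"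
  proof -
    have "a \<le> p x" if "(x, a) \<in> span {(x0, p x0)}" for x a
      using that sublinear_scaleR_ge[OF p] by (auto simp: span_singleton)
    then show ?thesis
      unfolding \<A>_def dominated_graph_def by (auto intro: span_base)
  qed
  moreover have "\<Union>\<C> \<in> \<A>" if "\<C> \<noteq> {}" and "subset.chain \<A> \<C>" for \<C>
  proof -
    have "\<C> \<subseteq> \<A>" and "\<And>G H. G \<in> \<C> \<Longrightarrow> H \<in> \<C> \<Longrightarrow> G \<subseteq> H \<or> H \<subseteq> G"
      using \<open>subset.chain \<A> \<C>\<close> by (auto simp: subset_chain_def)
    then have "dominated_graph p (\<Union>\<C>)"
      using dominated_graph_Union_chain \<open>\<C> \<noteq> {}\<close> unfolding \<A>_def by blast
    moreover have "(x0, p x0) \<in> \<Union>\<C>"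
      using \<open>\<C> \<subseteq> \<A>\<close> \<open>\<C> \<noteq> {}\<close> unfolding \<A>_def by blast
    ultimately show ?thesis unfolding \<A>_def by blast
  qed
  ultimately obtain M where "M \<in> \<A>" and max: "\<And>G. G \<in> \<A> \<Longrightarrow> M \<subseteq> G \<Longrightarrow> G = M"
    using subset_Zorn_nonempty[of \<A>] by (metis empty_iff)
  then have M: "dominated_graph p M" and x0: "(x0, p x0) \<in> M" by (simp_all add: \<A>_def)
  have "\<exists>a. (y, a) \<in> M" for y
  proof -
    obtain c where "dominated_graph p (span (insert (y, c) M))"
      using dominated_graph_extend[OF p M] .
    moreover have "M \<subseteq> span (insert (y, c) M)"
      by (meson span_superset subset_insertI subset_trans)
    ultimately have "span (insert (y, c) M) = M"
      using max x0 unfolding \<A>_def by blast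
    then show ?thesis using span_superset[of "insert (y, c) M"] by blast
  qed
  then have unique: "\<exists>!a. (y, a) \<in> M" for y
    using dominated_graph_unique[OF M] by blast
  define g where "g x = (THE a. (x, a) \<in> M)" for x
  have graph: "(x, g x) \<in> M" for x
    unfolding g_def using unique by (rule theI')
  show ?thesis
  proof
    show "linear g"
      unfolding g_def using M unique by (simp add: dominated_graph_def linear_subspace_graph)
    show "g x \<le> p x" for x
      using M graph by (auto simp: dominated_graph_def)
    show "g x0 = p x0"
      using dominated_graph_unique[OF M graph x0] .
  qed
qed

section \<open>Minkowski functionals\<close>

lemma balanced_scaleR_mem:
  assumes "balanced A" "\<bar>t\<bar> \<le> 1" "a \<in> A"
  shows "t *\<^sub>R a \<in> A"
  using assms unfolding balanced_def by blast

lemma balanced_convex_zero_interior: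
  fixes A :: "'a::real_normed_vector set"
  assumes "balanced A" "convex A" "interior A \<noteq> {}"
  shows "0 \<in> interior A"
proof -
  obtain x0 \<rho> where "0 < \<rho>" and ball: "ball x0 \<rho> \<subseteq> A"
    using assms(3) by (auto simp: mem_interior)
  have "z \<in> A" if "z \<in> ball 0 \<rho>" for z
  proof -
    have "x0 + z \<in> A" and "x0 - z \<in> A"
      using that ball by (auto simp: dist_norm)
    then have "(1/2) *\<^sub>R (x0 + z) + (1/2) *\<^sub>R ((-1) *\<^sub>R (x0 - z)) \<in> A"
      by (intro convexD[OF assms(2)] balanced_scaleR_mem[OF assms(1)]) auto
    then show ?thesis by (simp add: algebra_simps flip: scaleR_add_left)
  qed
  then show ?thesis using \<open>0 < \<rho>\<close> by (auto simp: mem_interior)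
qed

definition minkowski_functional :: "'a::real_vector set \<Rightarrow> 'a \<Rightarrow> real" where
  "minkowski_functional A x = Inf {s. 0 < s \<and> x \<in> (*\<^sub>R) s ` A}"

lemma minkowski_functional_le:
  assumes "0 < s" "x \<in> (*\<^sub>R) s ` A"
  shows "minkowski_functional A x \<le> s"
  unfolding minkowski_functional_def using assms
  by (intro cInf_lower) (auto intro!: bdd_belowI[of _ 0])

lemma minkowski_functional_le_one: "a \<in> A \<Longrightarrow> minkowski_functional A a \<le> 1"
  using minkowski_functional_le[of 1 a A] by simp

lemma mem_scaleR_image_if_norm_less:
  fixes x :: "'a::real_normed_vector"
  assumes "0 < \<rho>" "ball 0 \<rho> \<subseteq> A" "norm x / \<rho> < s"
  shows "0 < s" and "x \<in> (*\<^sub>R) s ` A"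
proof -
  show s: "0 < s" using assms(1,3) by (smt (verit) divide_nonneg_pos norm_ge_zero)
  have "norm ((1/s) *\<^sub>R x) < \<rho>"
    using assms(1,3) s by (simp add: divide_less_eq mult.commute)
  then have "(1/s) *\<^sub>R x \<in> A" using assms(2) by auto
  moreover have "x = s *\<^sub>R ((1/s) *\<^sub>R x)" using s by simp
  ultimately show "x \<in> (*\<^sub>R) s ` A" by blast
qed

lemma minkowski_functional_le_norm:
  fixes A :: "'a::real_normed_vector set"
  assumes "0 < \<rho>" "ball 0 \<rho> \<subseteq> A"
  shows "minkowski_functional A x \<le> norm x / \<rho>"
  using mem_scaleR_image_if_norm_less[OF assms] minkowski_functional_le by (metis dense_ge)

lemma minkowski_functional_lessE:
  fixes A :: "'a::real_normed_vector set"
  assumes "0 \<in> interior A" "minkowski_functional A x < t"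
  obtains s where "0 < s" "s < t" "x \<in> (*\<^sub>R) s ` A"
proof -
  obtain \<rho> where "0 < \<rho>" "ball 0 \<rho> \<subseteq> A" using assms(1) by (auto simp: mem_interior)
  then have "{s. 0 < s \<and> x \<in> (*\<^sub>R) s ` A} \<noteq> {}"
    using mem_scaleR_image_if_norm_less[of \<rho> A x "norm x / \<rho> + 1"] by auto
  then show ?thesis
    using assms(2) that unfolding minkowski_functional_def
    by (subst (asm) cInf_less_iff) (auto intro!: bdd_belowI[of _ 0])
qed

lemma minkowski_functional_add_le:
  fixes A :: "'a::real_normed_vector set"
  assumes "convex A" "0 \<in> interior A"
  shows "minkowski_functional A (x + y) \<le> minkowski_functional A x + minkowski_functional A y"
proof (rule dense_ge)
  fix z assume z: "minkowski_functional A x + minkowski_functional A y < z"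
  define e where "e = (z - minkowski_functional A x - minkowski_functional A y) / 2"
  have "0 < e" using z unfolding e_def by simp
  obtain s a where s: "0 < s" "s < minkowski_functional A x + e" "a \<in> A" "x = s *\<^sub>R a"
    using minkowski_functional_lessE[OF assms(2), of x] \<open>0 < e\<close> by (metis imageE less_add_same_cancel1)
  obtain t b where t: "0 < t" "t < minkowski_functional A y + e" "b \<in> A" "y = t *\<^sub>R b"
    using minkowski_functional_lessE[OF assms(2), of y] \<open>0 < e\<close> by (metis imageE less_add_same_cancel1)
  have "(s / (s + t)) *\<^sub>R a + (t / (s + t)) *\<^sub>R b \<in> A"
    using s t by (intro convexD[OF assms(1)]) (auto simp: add_divide_distrib[symmetric])
  moreover have "x + y = (s + t) *\<^sub>R ((s / (s + t)) *\<^sub>R a + (t / (s + t)) *\<^sub>R b)"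
    using s t by (simp add: scaleR_add_right)
  ultimately have "minkowski_functional A (x + y) \<le> s + t"
    using s t by (intro minkowski_functional_le) auto
  also have "\<dots> < z"
    using s(2) t(2) \<open>0 < e\<close> unfolding e_def by (simp add: field_simps)
  finally show "minkowski_functional A (x + y) \<le> z" by simp
qed

lemma minkowski_functional_scaleR_le:
  fixes A :: "'a::real_normed_vector set"
  assumes "0 \<in> interior A" "0 < c"
  shows "minkowski_functional A (c *\<^sub>R x) \<le> c * minkowski_functional A x"
proof (rule dense_ge)
  fix z assume "c * minkowski_functional A x < z"
  then have "minkowski_functional A x < z / c" using assms(2) by (simp add: field_simps)
  then obtain s where s: "0 < s" "s < z / c" "x \<in> (*\<^sub>R) s ` A"
    using minkowski_functional_lessE[OF assms(1)] by blast
  have "minkowski_functional A (c *\<^sub>R x) \<le> c * s"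
    using s assms(2) by (intro minkowski_functional_le) (auto simp: image_iff)
  also have "\<dots> < z" using s assms(2) by (simp add: field_simps)
  finally show "minkowski_functional A (c *\<^sub>R x) \<le> z" by simp
qed

lemma sublinear_minkowski_functional:
  fixes A :: "'a::real_normed_vector set"
  assumes "convex A" "0 \<in> interior A"
  shows "sublinear (minkowski_functional A)"
  unfolding sublinear_def
proof (intro conjI allI impI)
  show "minkowski_functional A (x + y) \<le> minkowski_functional A x + minkowski_functional A y" for x y
    using assms by (rule minkowski_functional_add_le)
  fix c x assume "0 < (c::real)"
  have "minkowski_functional A x = minkowski_functional A ((1 / c) *\<^sub>R (c *\<^sub>R x))"
    using \<open>0 < c\<close> by simp
  also have "\<dots> \<le> (1 / c) * minkowski_functional A (c *\<^sub>R x)"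
    using assms(2) \<open>0 < c\<close> by (intro minkowski_functional_scaleR_le) auto
  finally have "c * minkowski_functional A x \<le> minkowski_functional A (c *\<^sub>R x)"
    using \<open>0 < c\<close> by (simp add: field_simps)
  then show "minkowski_functional A (c *\<^sub>R x) = c * minkowski_functional A x"
    using minkowski_functional_scaleR_le[OF assms(2) \<open>0 < c\<close>, of x] by linarith
qed

lemma continuous_on_minkowski_functional:
  fixes A :: "'a::real_normed_vector set"
  assumes "convex A" "0 \<in> interior A"
  shows "continuous_on UNIV (minkowski_functional A)"
proof -
  obtain \<rho> where "0 < \<rho>" "ball 0 \<rho> \<subseteq> A" using assms(2) by (auto simp: mem_interior)
  have bound: "minkowski_functional A x - minkowski_functional A z \<le> (1 / \<rho>) * dist x z" for x z
  proof -
    have "minkowski_functional A x \<le> minkowski_functional A z + minkowski_functional A (x - z)"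
      using minkowski_functional_add_le[OF assms, of z "x - z"] by simp
    also have "minkowski_functional A (x - z) \<le> norm (x - z) / \<rho>"
      using \<open>0 < \<rho>\<close> \<open>ball 0 \<rho> \<subseteq> A\<close> by (rule minkowski_functional_le_norm)
    finally show ?thesis by (simp add: dist_norm)
  qed
  have "dist (minkowski_functional A x) (minkowski_functional A z) \<le> (1 / \<rho>) * dist x z" for x z
    using bound[of x z] bound[of z x] by (simp add: dist_real_def dist_commute abs_le_iff)
  then have "(1 / \<rho>)-lipschitz_on UNIV (minkowski_functional A)"
    using \<open>0 < \<rho>\<close> by (intro lipschitz_onI) auto
  then show ?thesis by (rule lipschitz_on_continuous_on)
qed

lemma minkowski_functional_less_imp_mem_scaled:
  fixes A :: "'a::real_normed_vector set"
  assumes "balanced A" "0 \<in> interior A" "minkowski_functional A x < t"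
  shows "x \<in> (*\<^sub>R) t ` A"
proof -
  obtain s a where s: "0 < s" "s < t" "a \<in> A" "x = s *\<^sub>R a"
    using minkowski_functional_lessE[OF assms(2,3)] by blast
  have "(s / t) *\<^sub>R a \<in> A" using s by (intro balanced_scaleR_mem[OF assms(1)]) auto
  moreover have "x = t *\<^sub>R ((s / t) *\<^sub>R a)" using s by simp
  ultimately show ?thesis by blast
qed

section \<open>Subspaces of finite codimension\<close>

lemma finite_codim_UNIV: "finite_codim UNIV"
  unfolding finite_codim_def by auto

lemma finite_codim_Int_kernel:
  assumes "finite_codim W" "linear h"
  shows "finite_codim (W \<inter> {z. h z = (0::real)})"
proof -
  obtain F where W: "subspace W" and F: "finite F" "span (W \<union> F) = UNIV"
    using assms(1) unfolding finite_codim_def by blast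
  have sub: "subspace (W \<inter> {z. h z = 0})"
    using W assms(2) by (intro subspace_inter linear_subspace_kernel)
  show ?thesis
  proof (cases "\<exists>w0\<in>W. h w0 \<noteq> 0")
    case False
    then have "W \<inter> {z. h z = 0} = W" by auto
    then show ?thesis using assms(1) by simp
  next
    case True
    then obtain w0 where w0: "w0 \<in> W" "h w0 \<noteq> 0" by blast
    define S where "S = span (W \<inter> {z. h z = 0} \<union> insert w0 F)"
    have "w \<in> S" if "w \<in> W" for w
    proof -
      define c where "c = h w / h w0"
      have "w - c *\<^sub>R w0 \<in> W \<inter> {z. h z = 0}"
        using that w0 W assms(2) by (simp add: c_def subspace_diff subspace_scale linear_diff linear_scale)
      then have "w - c *\<^sub>R w0 \<in> S" unfolding S_def by (intro span_base) blast
      moreover have "c *\<^sub>R w0 \<in> S" unfolding S_def by (intro span_scale span_base) blast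
      ultimately have "(w - c *\<^sub>R w0) + c *\<^sub>R w0 \<in> S" unfolding S_def by (rule span_add)
      then show ?thesis by simp
    qed
    moreover have "F \<subseteq> S" unfolding S_def by (auto intro: span_base)
    ultimately have "span (W \<union> F) \<subseteq> S"
      unfolding S_def by (intro span_minimal) auto
    then show ?thesis
      using sub F unfolding finite_codim_def S_def by (intro conjI exI[of _ "insert w0 F"]) auto
  qed
qed

lemma finite_codim_kernels:
  assumes "finite T" "\<And>k. k \<in> T \<Longrightarrow> linear (f k)"
  shows "finite_codim {z. \<forall>k\<in>T. f k z = (0::real)}"
  using assms
proof (induction T rule: finite_induct)
  case empty
  then show ?case by (simp add: finite_codim_UNIV)
next
  case (insert h T)
  have "{z. \<forall>k\<in>insert h T. f k z = 0} = {z. \<forall>k\<in>T. f k z = 0} \<inter> {z. f h z = 0}" by auto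
  then show ?case using insert by (simp add: finite_codim_Int_kernel)
qed

lemma supporting_functional_pos:
  fixes p :: "'a::real_vector \<Rightarrow> real"
  assumes "linear g" "\<And>x. g x \<le> p x" "g k = p k" "p (k - c) < p k - 1" "p (- a) \<le> 1"
  shows "0 < g (a + c)"
proof -
  have "g k - g c = g (k - c)" using assms(1) by (simp add: linear_diff)
  then have "1 < g c" using assms(2)[of "k - c"] assms(3,4) by linarith
  moreover have "g (a + c) = g c - g (- a)" using assms(1) by (simp add: linear_add linear_neg)
  ultimately show ?thesis using assms(2)[of "- a"] assms(5) by linarith
qed

lemma finite_codim_compact_part_absorbed:
  fixes A K :: "'a::real_normed_vector set"
  assumes "balanced A" "convex A" "0 \<in> interior A" "compact K" "1 < \<kappa>"
  obtains Y where "finite_codim Y"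
    and "\<And>a c. a \<in> A \<Longrightarrow> c \<in> K \<Longrightarrow> a + c \<in> Y \<Longrightarrow> c \<in> (*\<^sub>R) \<kappa> ` A"
proof -
  define p where "p = minkowski_functional A"
  have p: "sublinear p" and p_cont: "continuous_on UNIV p"
    unfolding p_def using assms(2,3)
    by (simp_all add: sublinear_minkowski_functional continuous_on_minkowski_functional)
  have "\<forall>k. \<exists>g. linear g \<and> (\<forall>x. g x \<le> p x) \<and> g k = p k"
    by (metis hahn_banach_supporting_functional[OF p])
  then obtain g where g_linear: "\<And>k. linear (g k)" and g_le: "\<And>k x. g k x \<le> p x"
    and g_at: "\<And>k. g k k = p k"
    by metis
  define S where "S = K \<inter> {c. \<kappa> \<le> p c}"
  define U where "U k = {c. p (k - c) < \<kappa> - 1}" for k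
  have "compact S"
    unfolding S_def using assms(4) p_cont by (intro compact_Int_closed closed_Collect_le) auto
  moreover have "open (U k)" for k
    unfolding U_def
    by (intro open_Collect_less continuous_on_compose2[OF p_cont] continuous_intros) auto
  moreover have "S \<subseteq> (\<Union>k\<in>S. U k)"
    using assms(5) sublinear_zero[OF p] by (auto simp: U_def)
  ultimately obtain T where "T \<subseteq> S" "finite T" and T_cover: "S \<subseteq> (\<Union>k\<in>T. U k)"
    by (rule compactE_image)
  define Y where "Y = {z. \<forall>k\<in>T. g k z = 0}"
  have "c \<in> (*\<^sub>R) \<kappa> ` A" if "a \<in> A" "c \<in> K" "a + c \<in> Y" for a c
  proof (rule ccontr)
    assume "c \<notin> (*\<^sub>R) \<kappa> ` A"
    then have "c \<in> S"
      using that(2) minkowski_functional_less_imp_mem_scaled[OF assms(1,3)]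
      by (force simp: S_def p_def)
    then obtain k where "k \<in> T" "p (k - c) < \<kappa> - 1" using T_cover by (auto simp: U_def)
    moreover have "\<kappa> \<le> p k" using \<open>k \<in> T\<close> \<open>T \<subseteq> S\<close> by (auto simp: S_def)
    moreover have "p (- a) \<le> 1"
      using balanced_scaleR_mem[OF assms(1), of "- 1" a] \<open>a \<in> A\<close>
      unfolding p_def by (auto intro: minkowski_functional_le_one)
    ultimately have "0 < g k (a + c)"
      using g_linear g_le g_at by (intro supporting_functional_pos) auto
    then show False using \<open>k \<in> T\<close> \<open>a + c \<in> Y\<close> by (simp add: Y_def)
  qed
  moreover have "finite_codim Y"
    unfolding Y_def using \<open>finite T\<close> g_linear by (rule finite_codim_kernels)
  ultimately show ?thesis using that by blast
qed

theorem corollary4p4: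
  fixes A :: "'a::banach set"
  assumes "balanced A" and "bounded A" and "convex A" and "closed A"
    and "interior A \<noteq> {}"
    and "compact K"
    and "cball 0 1 \<subseteq> {a + c | a c. a \<in> A \<and> c \<in> K}"
  shows "\<forall>r::real. 0 < r \<and> r < 1/2 \<longrightarrow>
           (\<exists>x\<in>A. \<exists>Y. finite_codim Y \<and>
              (\<lambda>y. x + r *\<^sub>R y) ` (cball 0 1 \<inter> Y) \<subseteq> A)"
proof (intro allI impI)
  fix r :: real assume r: "0 < r \<and> r < 1/2"
  have "0 \<in> interior A" using assms(1,3,5) by (rule balanced_convex_zero_interior)
  moreover have "1 < 1 / r - 1" using r by (simp add: field_simps)
  ultimately obtain Y where "finite_codim Y"
    and Y: "\<And>a c. a \<in> A \<Longrightarrow> c \<in> K \<Longrightarrow> a + c \<in> Y \<Longrightarrow> c \<in> (*\<^sub>R) (1 / r - 1) ` A"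
    using finite_codim_compact_part_absorbed[OF assms(1,3) _ assms(6)] by blast
  have "r *\<^sub>R y \<in> A" if y: "y \<in> cball 0 1 \<inter> Y" for y
  proof -
    obtain a c where "a \<in> A" "c \<in> K" "y = a + c" using y assms(7) by blast
    then obtain a' where "a' \<in> A" "c = (1 / r - 1) *\<^sub>R a'" using Y y by blast
    then have "r *\<^sub>R c = (1 - r) *\<^sub>R a'" using r by (simp add: right_diff_distrib)
    then have "r *\<^sub>R y = r *\<^sub>R a + (1 - r) *\<^sub>R a'"
      using \<open>y = a + c\<close> by (simp add: scaleR_add_right)
    also have "\<dots> \<in> A" using \<open>a \<in> A\<close> \<open>a' \<in> A\<close> r by (intro convexD[OF assms(3)]) auto
    finally show ?thesis .
  qed
  then show "\<exists>x\<in>A. \<exists>Y. finite_codim Y \<and> (\<lambda>y. x + r *\<^sub>R y) ` (cball 0 1 \<inter> Y) \<subseteq> A"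
    using \<open>0 \<in> interior A\<close> interior_subset \<open>finite_codim Y\<close> by (intro bexI[of _ 0]) auto
qed

end
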